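(* For every $\alpha>0$ there is $L_0$ such that for every integer $L\geq L_0$ there is $\vartheta_0>0$ such that for every $0<\vartheta\leq\vartheta_0$ there is $n_0$ such that for all $n\geq n_0$ the following holds. Let $H=([n],E)$ be a $3$-uniform hypergraph with $d(i,j)\geq\min\left(i,j,\frac{n}{2}\right)+\alpha n$ for all $\{i,j\}\in[n]^{(2)}$, and let $\mathcal{R}\subseteq[n]$ be a set with $\frac{\vartheta^2}{2}n\leq|\mathcal{R}|\leq\vartheta^2 n$ such that for all disjoint ordered pairs of distinct vertices $(x,y),(w,z)\in[n]^2$ there are at least $\vartheta|\mathcal{R}|^{L-2}/2$ tight paths of length $L$ in $H$ connecting $(x,y)$ and $(w,z)$ with all internal vertices in $\mathcal{R}$. If $\mathcal{R}'\subseteq\mathcal{R}$ with $|\mathcal{R}'|\leq 2\vartheta^4 n$, then for all disjoint ordered pairs of distinct vertices $(x,y),(w,z)\in[n]^2$ there is a tight $(x,y)$-$(w,z)$-path of length $L$ in $H$ with all internal vertices belonging to $\mathcal{R}\setminus\mathcal{R}'$.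
   Context: Vertices are the integers $[n]$, compared as integers. $d(v,w)=|\{x: \{v,w,x\}\in E\}|$ is the pair degree. A tight path of length $\ell$ (number of edges) is a 3-graph on distinct vertices $x_1,\dots,x_{\ell+2}$ with edges $x_ix_{i+1}x_{i+2}$, $i\in[\ell]$; it is an $(x_1,x_2)$-$(x_{\ell+1},x_{\ell+2})$-path (connects these pairs), and its internal vertices are $x_3,\dots,x_\ell$. *)

theory Defs
  imports Complex_Main
begin

definition uniform3 :: "nat \<Rightarrow> nat set set \<Rightarrow> bool" where
  "uniform3 n E \<longleftrightarrow> (\<forall>e\<in>E. e \<subseteq> {1..n} \<and> card e = 3)"

definition pair_degree :: "nat set set \<Rightarrow> nat \<Rightarrow> nat \<Rightarrow> nat" where
  "pair_degree E v w = card {x. {v, w, x} \<in> E}"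

definition tight_path :: "nat set set \<Rightarrow> nat list \<Rightarrow> bool" where
  "tight_path E xs \<longleftrightarrow> distinct xs \<and>
     (\<forall>i. i + 2 < length xs \<longrightarrow> {xs ! i, xs ! (i+1), xs ! (i+2)} \<in> E)"

text \<open>Tight (x,y)-(w,z)-paths of length L (L edges, L+2 vertices) whose internal
  vertices x_3,...,x_L (0-based indices 2..L-1) all lie in S.\<close>
definition tight_paths_conn ::
  "nat set set \<Rightarrow> nat \<Rightarrow> nat \<Rightarrow> nat \<Rightarrow> nat \<Rightarrow> nat \<Rightarrow> nat set \<Rightarrow> nat list set" where
  "tight_paths_conn E L x y w z S = {xs. length xs = L + 2 \<and> tight_path E xs \<and>
     xs ! 0 = x \<and> xs ! 1 = y \<and> xs ! L = w \<and> xs ! (L+1) = z \<and>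
     (\<forall>i. 2 \<le> i \<and> i < L \<longrightarrow> xs ! i \<in> S)}"

definition disj_pairs :: "nat \<Rightarrow> nat \<Rightarrow> nat \<Rightarrow> nat \<Rightarrow> nat \<Rightarrow> bool" where
  "disj_pairs n x y w z \<longleftrightarrow> {x, y, w, z} \<subseteq> {1..n} \<and> x \<noteq> y \<and> w \<noteq> z \<and>
     {x, y} \<inter> {w, z} = {}"

end

theory Submission
  imports Defs
begin

(* A tight path with prescribed end pairs is determined by its L - 2 interior vertices. Hence the
   paths with interior in R that meet R' number at most (L - 2) |R'| |R|^(L-3), and since
   |R'| <= 2 theta^4 n <= 4 theta^2 |R| this is below theta |R|^(L-2) / 2 as soon as
   theta <= 1 / (8 L). So some of the counted paths avoids R'. *)

lemma card_lists_nth_in: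
  assumes "finite S" "T \<subseteq> S" "k < m"
  shows "card {zs. set zs \<subseteq> S \<and> length zs = m \<and> zs ! k \<in> T} = card T * card S ^ (m - 1)"
proof -
  define ins :: "'a \<times> 'a list \<Rightarrow> 'a list" where "ins = (\<lambda>(a, ys). take k ys @ a # drop k ys)"
  let ?Ls = "{ys. set ys \<subseteq> S \<and> length ys = m - 1}"
  have "inj_on ins (T \<times> ?Ls)"
  proof (rule inj_onI)
    fix p q assume "p \<in> T \<times> ?Ls" "q \<in> T \<times> ?Ls" "ins p = ins q"
    moreover obtain a ys b zs where "p = (a, ys)" "q = (b, zs)" by fastforce
    ultimately have "take k ys = take k zs" "a = b" "drop k ys = drop k zs"
      by (auto simp: ins_def append_eq_append_conv)
    then show "p = q" using \<open>p = (a, ys)\<close> \<open>q = (b, zs)\<close> by (metis append_take_drop_id)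
  qed
  moreover have "ins ` (T \<times> ?Ls) = {zs. set zs \<subseteq> S \<and> length zs = m \<and> zs ! k \<in> T}"
  proof (intro equalityI subsetI)
    fix zs assume "zs \<in> ins ` (T \<times> ?Ls)"
    then obtain a ys where "zs = ins (a, ys)" "a \<in> T" "ys \<in> ?Ls" by blast
    then show "zs \<in> {zs. set zs \<subseteq> S \<and> length zs = m \<and> zs ! k \<in> T}"
      using assms set_take_subset[of k ys] set_drop_subset[of k ys] by (auto simp: ins_def nth_append)
  next
    fix zs assume zs: "zs \<in> {zs. set zs \<subseteq> S \<and> length zs = m \<and> zs ! k \<in> T}"
    then have "zs = ins (zs ! k, take k zs @ drop (Suc k) zs)"
      using assms(3) by (simp add: ins_def id_take_nth_drop min_def)
    moreover have "set (take k zs @ drop (Suc k) zs) \<subseteq> S"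
      using zs by (auto dest: in_set_takeD in_set_dropD)
    ultimately show "zs \<in> ins ` (T \<times> ?Ls)"
      using zs assms(3) by (intro image_eqI) auto
  qed
  ultimately have "card {zs. set zs \<subseteq> S \<and> length zs = m \<and> zs ! k \<in> T} = card (T \<times> ?Ls)"
    using card_image by fastforce
  also have "\<dots> = card T * card S ^ (m - 1)"
    by (simp add: card_cartesian_product card_lists_length_eq assms(1))
  finally show ?thesis .
qed

lemma card_lists_meeting_le:
  assumes "finite S" "T \<subseteq> S"
  shows "card {zs. set zs \<subseteq> S \<and> length zs = m \<and> set zs \<inter> T \<noteq> {}} \<le> m * card T * card S ^ (m - 1)"
proof -
  have "{zs. set zs \<subseteq> S \<and> length zs = m \<and> set zs \<inter> T \<noteq> {}}
      = (\<Union>k<m. {zs. set zs \<subseteq> S \<and> length zs = m \<and> zs ! k \<in> T})"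
    by (auto simp: in_set_conv_nth dest: nth_mem)
  also have "card \<dots> \<le> (\<Sum>k<m. card {zs. set zs \<subseteq> S \<and> length zs = m \<and> zs ! k \<in> T})"
    by (rule card_UN_le) simp
  also have "\<dots> = m * card T * card S ^ (m - 1)"
    using assms by (simp add: card_lists_nth_in)
  finally show ?thesis .
qed

definition path_interior :: "nat \<Rightarrow> 'a list \<Rightarrow> 'a list" where
  "path_interior L xs = take (L - 2) (drop 2 xs)"

lemma tight_paths_conn_eq_path_interior:
  assumes "xs \<in> tight_paths_conn E L x y w z S" "2 \<le> L"
  shows "xs = [x, y] @ path_interior L xs @ [w, z]"
proof (rule nth_equalityI)
  show "length xs = length ([x, y] @ path_interior L xs @ [w, z])"
    using assms by (simp add: tight_paths_conn_def path_interior_def)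
  fix i assume "i < length xs"
  then consider "i = 0" | "i = 1" | "2 \<le> i \<and> i < L" | "i = L" | "i = L + 1"
    using assms by (force simp: tight_paths_conn_def)
  then show "xs ! i = ([x, y] @ path_interior L xs @ [w, z]) ! i"
  proof cases
    case 3
    then obtain j where "i = j + 2" by (metis le_add_diff_inverse2)
    then show ?thesis
      using 3 assms by (auto simp: tight_paths_conn_def path_interior_def nth_append)
  qed (use assms in \<open>auto simp: tight_paths_conn_def path_interior_def nth_append\<close>)
qed

lemma path_interior_in_lists_meeting:
  assumes "xs \<in> tight_paths_conn E L x y w z S" "\<not> xs \<in> tight_paths_conn E L x y w z (S - T)"
  shows "set (path_interior L xs) \<subseteq> S \<and> length (path_interior L xs) = L - 2
    \<and> set (path_interior L xs) \<inter> T \<noteq> {}"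
proof -
  have len: "length xs = L + 2" and int_S: "\<forall>i. 2 \<le> i \<and> i < L \<longrightarrow> xs ! i \<in> S"
    using assms(1) by (auto simp: tight_paths_conn_def)
  have nth_int: "path_interior L xs ! j = xs ! (j + 2)" if "j < L - 2" for j
    using that len by (simp add: path_interior_def add.commute)
  have len_int: "length (path_interior L xs) = L - 2"
    using len by (simp add: path_interior_def)
  obtain i where "2 \<le> i" "i < L" "xs ! i \<in> T"
    using assms by (auto simp: tight_paths_conn_def)
  then obtain j where "j < L - 2" "xs ! (j + 2) \<in> T"
    by (metis le_add_diff_inverse2 less_diff_conv)
  then have "set (path_interior L xs) \<inter> T \<noteq> {}"
    using nth_int len_int nth_mem[of j "path_interior L xs"] by auto
  moreover have "set (path_interior L xs) \<subseteq> S"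
    using int_S nth_int len by (auto simp: in_set_conv_nth path_interior_def)
  ultimately show ?thesis
    using len_int by blast
qed

lemma card_tight_paths_conn_le:
  assumes "finite S" "T \<subseteq> S"
  shows "card (tight_paths_conn E L x y w z S)
    \<le> card (tight_paths_conn E L x y w z (S - T)) + (L - 2) * card T * card S ^ (L - 3)"
proof -
  let ?P = "tight_paths_conn E L x y w z"
  let ?M = "{zs. set zs \<subseteq> S \<and> length zs = L - 2 \<and> set zs \<inter> T \<noteq> {}}"
  have "?P (S - T) \<subseteq> ?P S"
    by (auto simp: tight_paths_conn_def)
  then have "card (?P S) \<le> card (?P (S - T)) + card (?P S - ?P (S - T))"
    by (metis Diff_partition card_Un_le)
  moreover have "card (?P S - ?P (S - T)) \<le> card ?M"
  proof (rule card_inj_on_le)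
    show "path_interior L ` (?P S - ?P (S - T)) \<subseteq> ?M"
      using path_interior_in_lists_meeting by blast
    show "inj_on (path_interior L) (?P S - ?P (S - T))"
    proof (rule inj_onI)
      fix xs ys assume xs: "xs \<in> ?P S - ?P (S - T)" and "ys \<in> ?P S - ?P (S - T)"
        and "path_interior L xs = path_interior L ys"
      moreover have "2 \<le> L"
        using path_interior_in_lists_meeting[of xs E L x y w z S T] xs
        by (cases "2 \<le> L") (auto simp: path_interior_def)
      ultimately show "xs = ys"
        by (metis DiffD1 tight_paths_conn_eq_path_interior)
    qed
    show "finite ?M"
      using assms(1) by (rule finite_subset[OF _ finite_lists_length_eq, rotated]) auto
  qed
  moreover have "card ?M \<le> (L - 2) * card T * card S ^ (L - 3)"
    using card_lists_meeting_le[OF assms, of "L - 2"] by (simp add: diff_diff_left)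
  ultimately show ?thesis
    by linarith
qed

lemma meeting_bound_lt_count_bound:
  fixes \<theta> r r' :: real
  assumes "3 \<le> L" "0 < \<theta>" "\<theta> \<le> 1 / (8 * real L)" "0 < r" "r' \<le> 4 * \<theta>^2 * r"
  shows "real (L - 2) * r' * r ^ (L - 3) < \<theta> * r ^ (L - 2) / 2"
proof -
  have "4 * real (L - 2) * \<theta> < 1 / 2"
  proof -
    have "4 * real (L - 2) * \<theta> \<le> 4 * real (L - 2) * (1 / (8 * real L))"
      using assms(3) by (intro mult_left_mono) auto
    also have "\<dots> < 1 / 2"
      using assms(1) by (simp add: field_simps of_nat_diff)
    finally show ?thesis .
  qed
  have "real (L - 2) * r' \<le> real (L - 2) * (4 * \<theta>^2 * r)"
    using assms(5) by (rule mult_left_mono) simp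
  also have "\<dots> = (4 * real (L - 2) * \<theta>) * (\<theta> * r)"
    by (simp add: power2_eq_square)
  also have "\<dots> < 1 / 2 * (\<theta> * r)"
    using \<open>4 * real (L - 2) * \<theta> < 1 / 2\<close> assms(2,4) by (intro mult_strict_right_mono) auto
  finally have "real (L - 2) * r' * r ^ (L - 3) < 1 / 2 * (\<theta> * r) * r ^ (L - 3)"
    using assms(4) by (intro mult_strict_right_mono) auto
  also have "\<dots> = \<theta> * r ^ (L - 2) / 2"
    using assms(1) by (simp add: power_Suc[symmetric] Suc_diff_Suc numeral_3_eq_3 numeral_2_eq_2)
  finally show ?thesis .
qed

lemma tight_paths_conn_avoiding_nonempty:
  assumes "3 \<le> L" "0 < \<theta>" "\<theta> \<le> 1 / (8 * real L)"
    and "finite R" "R \<noteq> {}" "R' \<subseteq> R" "real (card R') \<le> 4 * \<theta>^2 * real (card R)"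
    and "\<theta> * real (card R) ^ (L - 2) / 2 \<le> real (card (tight_paths_conn E L x y w z R))"
  shows "tight_paths_conn E L x y w z (R - R') \<noteq> {}"
proof
  assume "tight_paths_conn E L x y w z (R - R') = {}"
  then have "card (tight_paths_conn E L x y w z R) \<le> (L - 2) * card R' * card R ^ (L - 3)"
    using card_tight_paths_conn_le[OF assms(4,6), of E L x y w z] by simp
  then have "real (card (tight_paths_conn E L x y w z R))
      \<le> real (L - 2) * real (card R') * real (card R) ^ (L - 3)"
    by (metis of_nat_mono of_nat_mult of_nat_power)
  moreover have "0 < real (card R)"
    using assms(4,5) by (simp add: card_gt_0_iff)
  ultimately show False
    using meeting_bound_lt_count_bound[OF assms(1-3) _ assms(7)] assms(8) by linarith
qed

theorem lemma2p3:
  shows "\<forall>\<alpha>::real. \<alpha> > 0 \<longrightarrow> (\<exists>L0::nat. \<forall>L\<ge>L0. \<exists>\<theta>0::real. \<theta>0 > 0 \<and>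
    (\<forall>\<theta>::real. 0 < \<theta> \<and> \<theta> \<le> \<theta>0 \<longrightarrow> (\<exists>n0::nat. \<forall>n\<ge>n0.
      \<forall>E R R'.
        uniform3 n E \<longrightarrow>
        (\<forall>i\<in>{1..n}. \<forall>j\<in>{1..n}. i \<noteq> j \<longrightarrow>
            real (pair_degree E i j) \<ge> min (min (real i) (real j)) (real n / 2) + \<alpha> * real n) \<longrightarrow>
        R \<subseteq> {1..n} \<longrightarrow>
        \<theta>^2 / 2 * real n \<le> real (card R) \<longrightarrow> real (card R) \<le> \<theta>^2 * real n \<longrightarrow>
        (\<forall>x y w z. disj_pairs n x y w z \<longrightarrow>
            real (card (tight_paths_conn E L x y w z R)) \<ge> \<theta> * real (card R) ^ (L - 2) / 2) \<longrightarrow>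
        R' \<subseteq> R \<longrightarrow> real (card R') \<le> 2 * \<theta>^4 * real n \<longrightarrow>
        (\<forall>x y w z. disj_pairs n x y w z \<longrightarrow>
            tight_paths_conn E L x y w z (R - R') \<noteq> {}))))"
  apply (intro allI impI exI[of _ "3::nat"])
  subgoal for \<alpha> L
  proof (intro exI[of _ "1 / (8 * real L)"] conjI allI impI exI[of _ "1::nat"])
    assume "3 \<le> L"
    then show "0 < 1 / (8 * real L)"
      by simp
    fix \<theta> :: real and n E R R' x y w z
    assume "3 \<le> L" "0 < \<theta> \<and> \<theta> \<le> 1 / (8 * real L)" "1 \<le> n" "R \<subseteq> {1..n}"
      and R_lower: "\<theta>^2 / 2 * real n \<le> real (card R)"
      and counts: "\<forall>x y w z. disj_pairs n x y w z \<longrightarrow>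
            real (card (tight_paths_conn E L x y w z R)) \<ge> \<theta> * real (card R) ^ (L - 2) / 2"
      and "R' \<subseteq> R" and R'_upper: "real (card R') \<le> 2 * \<theta>^4 * real n"
      and "disj_pairs n x y w z"
    show "tight_paths_conn E L x y w z (R - R') \<noteq> {}"
    proof (rule tight_paths_conn_avoiding_nonempty)
      show "finite R"
        using \<open>R \<subseteq> {1..n}\<close> finite_subset by blast
      have "0 < \<theta>^2 / 2 * real n"
        using \<open>0 < \<theta> \<and> _\<close> \<open>1 \<le> n\<close> by simp
      then show "R \<noteq> {}"
        using R_lower by auto
      have "2 * \<theta>^4 * real n = 4 * \<theta>^2 * (\<theta>^2 / 2 * real n)"
        by (simp add: power4_eq_xxxx power2_eq_square)
      also have "\<dots> \<le> 4 * \<theta>^2 * real (card R)"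
        using R_lower by (intro mult_left_mono) auto
      finally show "real (card R') \<le> 4 * \<theta>^2 * real (card R)"
        using R'_upper by linarith
    qed (use \<open>3 \<le> L\<close> \<open>0 < \<theta> \<and> _\<close> \<open>R' \<subseteq> R\<close> counts \<open>disj_pairs n x y w z\<close> in auto)
  qed
  done

end
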